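(* Let $K$ be a field and let $f\colon\mathbb Z^k\to K$ be a hypergeometric term on $\mathbb Z^k$ that is not a zero divisor. Then for any finite sequence $\vec w_1,\dots,\vec w_n$ of vectors in $\mathbb Z^k$, the hypergeometric term $f^{\vec w_1}f^{\vec w_2}\cdots f^{\vec w_n}$ (pointwise product) is not a zero divisor.
   Context: $f^{\vec w}(\vec z)=f(\vec z+\vec w)$. A hypergeometric term on $\mathbb Z^k$ over $K$ is a function $f\colon\mathbb Z^k\to K$ such that for each $i\in\{1,\dots,k\}$ there are nonzero polynomials $A_i,B_i\in K[\vec z]$ with $A_i(\vec z)f(\vec z)=B_i(\vec z)f(\vec z+\vec e_i)$ for all $\vec z\in\mathbb Z^k$. A function $g\colon\mathbb Z^k\to K$ is a zero divisor if there is a nonzero polynomial $p$ with $p(\vec z)g(\vec z)=0$ for all $\vec z\in\mathbb Z^k$. *)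

theory Defs
  imports "HOL-Analysis.Analysis" "HOL-Library.Poly_Mapping"
begin

text \<open>Multivariate polynomials over K in the variables indexed by the finite type 'k,
  represented as finitely supported maps from monomials (exponent vectors) to coefficients.\<close>
type_synonym ('k, 'a) mpoly = "('k \<Rightarrow>\<^sub>0 nat) \<Rightarrow>\<^sub>0 'a"

definition mpoly_eval :: "('k::finite, 'a::field) mpoly \<Rightarrow> int ^ 'k \<Rightarrow> 'a" where
  "mpoly_eval p z =
     (\<Sum>mon::('k \<Rightarrow>\<^sub>0 nat)\<in>Poly_Mapping.keys p. Poly_Mapping.lookup p mon * (\<Prod>i\<in>Poly_Mapping.keys mon. (of_int (z $ i) :: 'a) ^ (Poly_Mapping.lookup mon i :: nat)))"

definition unit_vec :: "'k::finite \<Rightarrow> int ^ 'k" where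
  "unit_vec i = (\<chi> j. if j = i then 1 else 0)"

definition hypergeometric_term :: "(int ^ 'k::finite \<Rightarrow> 'a::field) \<Rightarrow> bool" where
  "hypergeometric_term f \<longleftrightarrow>
     (\<forall>i. \<exists>A B :: ('k, 'a) mpoly. A \<noteq> 0 \<and> B \<noteq> 0 \<and>
        (\<forall>z. mpoly_eval A z * f z = mpoly_eval B z * f (z + unit_vec i)))"

definition zero_divisor :: "(int ^ 'k::finite \<Rightarrow> 'a::field) \<Rightarrow> bool" where
  "zero_divisor g \<longleftrightarrow> (\<exists>p :: ('k, 'a) mpoly. p \<noteq> 0 \<and> (\<forall>z. mpoly_eval p z * g z = 0))"

end

theory Submission
  imports Defs
begin

(* Say that f dominates g if, off the zero set of some nonzero polynomial, g vanishes only where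
   f does. Since polynomials form a domain, domination is transitive and closed under products.
   As f is not a zero divisor, no nonzero polynomial vanishes identically on Z^k, so domination is
   also invariant under translation. The recurrence A f = B f(. + e_i) makes f and f(. + e_i)
   dominate each other, hence f dominates all its translates and all products of them; and a
   function dominated by a non-zero-divisor is not a zero divisor. *)

(* The library's integral-domain instance for poly_mapping needs linearly ordered exponent vectors;
   we pull back the order of nat \<Rightarrow>\<^sub>0 nat along this additive embedding. *)
lift_definition reindex_to_nat :: "('k::countable \<Rightarrow>\<^sub>0 'b::zero) \<Rightarrow> (nat \<Rightarrow>\<^sub>0 'b)"
  is "\<lambda>(m :: 'k \<Rightarrow> 'b) j. if j \<in> range (to_nat :: 'k \<Rightarrow> nat) then m (from_nat j) else 0"
proof -
  fix m :: "'k \<Rightarrow> 'b"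
  assume "finite {i. m i \<noteq> 0}"
  then have "finite (to_nat ` {i. m i \<noteq> 0})"
    by simp
  then show "finite {j. (if j \<in> range (to_nat :: 'k \<Rightarrow> nat) then m (from_nat j) else 0) \<noteq> 0}"
    by (rule rev_finite_subset) auto
qed

lemma lookup_reindex_to_nat [simp]:
  "Poly_Mapping.lookup (reindex_to_nat m) (to_nat i) = Poly_Mapping.lookup m i"
  by transfer simp

lemma reindex_to_nat_add:
  "reindex_to_nat (a + b) = reindex_to_nat a + (reindex_to_nat b :: nat \<Rightarrow>\<^sub>0 'b::monoid_add)"
  by transfer (simp add: fun_eq_iff)

lemma inj_reindex_to_nat: "inj reindex_to_nat"
  by (rule injI, rule poly_mapping_eqI) (metis lookup_reindex_to_nat)

lemma lookup_mult_keys: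
  fixes p q :: "'m::monoid_add \<Rightarrow>\<^sub>0 'a::semiring_0"
  shows "Poly_Mapping.lookup (p * q) m =
    (\<Sum>(a, b)\<in>Poly_Mapping.keys p \<times> Poly_Mapping.keys q.
       Poly_Mapping.lookup p a * Poly_Mapping.lookup q b when m = a + b)"
proof -
  have "Poly_Mapping.lookup (p * q) m =
      (\<Sum>(a, b). Poly_Mapping.lookup p a * Poly_Mapping.lookup q b when m = a + b)"
    by (simp add: times_poly_mapping.rep_eq prod_fun_unfold_prod)
  also have "\<dots> = (\<Sum>(a, b)\<in>Poly_Mapping.keys p \<times> Poly_Mapping.keys q.
       Poly_Mapping.lookup p a * Poly_Mapping.lookup q b when m = a + b)"
    by (rule Sum_any.expand_superset) (auto simp: in_keys_iff)
  finally show ?thesis .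
qed

lemma poly_mapping_mult_nonzero_if_ordered_embedding:
  fixes \<phi> :: "'m::monoid_add \<Rightarrow> 'o::{linorder, ordered_cancel_comm_monoid_add}"
    and p q :: "'m \<Rightarrow>\<^sub>0 'a::semiring_no_zero_divisors"
  assumes "inj \<phi>" and \<phi>_add: "\<And>a b. \<phi> (a + b) = \<phi> a + \<phi> b"
    and "p \<noteq> 0" "q \<noteq> 0"
  shows "p * q \<noteq> 0"
proof -
  let ?K = "Poly_Mapping.keys p" and ?L = "Poly_Mapping.keys q"
  have "?K \<noteq> {}" "?L \<noteq> {}"
    using assms by auto
  then have "Max (\<phi> ` ?K) \<in> \<phi> ` ?K" "Max (\<phi> ` ?L) \<in> \<phi> ` ?L"
    by simp_all
  then obtain a0 b0 where a0: "a0 \<in> ?K" "\<phi> a0 = Max (\<phi> ` ?K)"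
    and b0: "b0 \<in> ?L" "\<phi> b0 = Max (\<phi> ` ?L)"
    by (metis imageE)
  have leading: "a = a0 \<and> b = b0" if "a \<in> ?K" "b \<in> ?L" "a0 + b0 = a + b" for a b
  proof -
    have le: "\<phi> a \<le> \<phi> a0" "\<phi> b \<le> \<phi> b0"
      using a0 b0 that by simp_all
    moreover have "\<phi> a0 + \<phi> b0 = \<phi> a + \<phi> b"
      using that(3) by (metis \<phi>_add)
    ultimately have "\<phi> a = \<phi> a0 \<and> \<phi> b = \<phi> b0"
      using add_less_le_mono[of "\<phi> a" "\<phi> a0" "\<phi> b" "\<phi> b0"]
        add_le_less_mono[of "\<phi> a" "\<phi> a0" "\<phi> b" "\<phi> b0"]
      by (metis order.order_iff_strict order_less_irrefl)
    then show ?thesis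
      using \<open>inj \<phi>\<close> by (simp add: inj_eq)
  qed
  have "Poly_Mapping.lookup (p * q) (a0 + b0) =
      (\<Sum>ab\<in>?K \<times> ?L. if ab = (a0, b0) then Poly_Mapping.lookup p a0 * Poly_Mapping.lookup q b0 else 0)"
    unfolding lookup_mult_keys
    by (rule sum.cong[OF refl]) (auto simp: when_def dest: leading split: if_splits)
  also have "\<dots> \<noteq> 0"
    using a0(1) b0(1) by (simp add: in_keys_iff)
  finally show ?thesis
    by auto
qed

lemma mpoly_mult_nonzero:
  fixes p q :: "('k::countable \<Rightarrow>\<^sub>0 nat) \<Rightarrow>\<^sub>0 'a::semiring_no_zero_divisors"
  assumes "p \<noteq> 0" "q \<noteq> 0"
  shows "p * q \<noteq> 0"
  using inj_reindex_to_nat reindex_to_nat_add assms by (rule poly_mapping_mult_nonzero_if_ordered_embedding)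

definition monom_eval :: "('k::finite \<Rightarrow>\<^sub>0 nat) \<Rightarrow> int ^ 'k \<Rightarrow> 'a::field" where
  "monom_eval m z = (\<Prod>i\<in>Poly_Mapping.keys m. (of_int (z $ i) :: 'a) ^ Poly_Mapping.lookup m i)"

lemma monom_eval_UNIV:
  "monom_eval m z = (\<Prod>i\<in>UNIV. (of_int (z $ i) :: 'a::field) ^ Poly_Mapping.lookup m i)"
  unfolding monom_eval_def by (rule prod.mono_neutral_left) (auto simp: in_keys_iff)

lemma monom_eval_add: "(monom_eval (a + b) z :: 'a::field) = monom_eval a z * monom_eval b z"
  unfolding monom_eval_UNIV by (simp add: lookup_add power_add prod.distrib)

lemma mpoly_eval_superset:
  assumes "finite S" "Poly_Mapping.keys p \<subseteq> S"
  shows "mpoly_eval p z = (\<Sum>m\<in>S. Poly_Mapping.lookup p m * monom_eval m z)"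
  unfolding mpoly_eval_def monom_eval_def[symmetric]
  by (rule sum.mono_neutral_left) (use assms in \<open>auto simp: in_keys_iff\<close>)

lemma mpoly_eval_add: "mpoly_eval (p + q) z = mpoly_eval p z + mpoly_eval q z"
proof -
  let ?S = "Poly_Mapping.keys p \<union> Poly_Mapping.keys q"
  have "mpoly_eval (p + q) z = (\<Sum>m\<in>?S. Poly_Mapping.lookup (p + q) m * monom_eval m z)"
    by (rule mpoly_eval_superset) (auto dest: set_mp[OF keys_add])
  also have "\<dots> = (\<Sum>m\<in>?S. Poly_Mapping.lookup p m * monom_eval m z)
      + (\<Sum>m\<in>?S. Poly_Mapping.lookup q m * monom_eval m z)"
    by (simp add: lookup_add distrib_right sum.distrib)
  also have "\<dots> = mpoly_eval p z + mpoly_eval q z"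
    using mpoly_eval_superset[of ?S p z] mpoly_eval_superset[of ?S q z] by simp
  finally show ?thesis .
qed

lemma mpoly_eval_mult: "mpoly_eval (p * q) z = mpoly_eval p z * mpoly_eval q z"
proof -
  let ?K = "Poly_Mapping.keys p" and ?L = "Poly_Mapping.keys q"
  let ?lp = "Poly_Mapping.lookup p" and ?lq = "Poly_Mapping.lookup q"
  let ?S = "(\<lambda>(a, b). a + b) ` (?K \<times> ?L)"
  have "mpoly_eval (p * q) z = (\<Sum>m\<in>?S. Poly_Mapping.lookup (p * q) m * monom_eval m z)"
    by (rule mpoly_eval_superset) (use keys_mult in fastforce)+
  also have "\<dots> = (\<Sum>m\<in>?S. \<Sum>(a, b)\<in>?K \<times> ?L. ?lp a * ?lq b * monom_eval m z when m = a + b)"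
    by (simp add: lookup_mult_keys sum_distrib_right when_mult case_prod_beta)
  also have "\<dots> = (\<Sum>(a, b)\<in>?K \<times> ?L. \<Sum>m\<in>?S. ?lp a * ?lq b * monom_eval m z when m = a + b)"
    unfolding case_prod_beta by (rule sum.swap)
  also have "\<dots> = (\<Sum>(a, b)\<in>?K \<times> ?L. ?lp a * ?lq b * monom_eval (a + b) z)"
    by (rule sum.cong[OF refl]) (auto simp: when_def)
  also have "\<dots> = (\<Sum>a\<in>?K. \<Sum>b\<in>?L. (?lp a * monom_eval a z) * (?lq b * monom_eval b z))"
    by (simp add: sum.cartesian_product monom_eval_add mult_ac)
  also have "\<dots> = mpoly_eval p z * mpoly_eval q z"
    by (simp add: mpoly_eval_def monom_eval_def[symmetric] sum_product)
  finally show ?thesis .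
qed

lemma int_vec_induct [case_names zero plus minus]:
  fixes w :: "int ^ 'k::finite"
  assumes zero: "P 0"
    and plus: "\<And>w i. P w \<Longrightarrow> P (w + unit_vec i)"
    and minus: "\<And>w i. P w \<Longrightarrow> P (w - unit_vec i)"
  shows "P w"
proof (induction "\<Sum>i\<in>UNIV. nat \<bar>w $ i\<bar>" arbitrary: w rule: less_induct)
  case less
  show ?case
  proof (cases "w = 0")
    case True
    then show ?thesis
      using zero by simp
  next
    case False
    then obtain i where i: "w $ i \<noteq> 0"
      by (auto simp: vec_eq_iff)
    have smaller: "P w'" if "\<And>j. j \<noteq> i \<Longrightarrow> w' $ j = w $ j" "\<bar>w' $ i\<bar> < \<bar>w $ i\<bar>" for w'
    proof (rule less)
      show "(\<Sum>j\<in>UNIV. nat \<bar>w' $ j\<bar>) < (\<Sum>j\<in>UNIV. nat \<bar>w $ j\<bar>)"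
      proof (rule sum_strict_mono_ex1)
        show "\<forall>j\<in>UNIV. nat \<bar>w' $ j\<bar> \<le> nat \<bar>w $ j\<bar>"
          using that by (metis nat_mono order.refl order_less_imp_le)
        show "\<exists>j\<in>UNIV. nat \<bar>w' $ j\<bar> < nat \<bar>w $ j\<bar>"
          using that(2) by (intro bexI[of _ i]) auto
      qed simp
    qed
    show ?thesis
    proof (cases "w $ i > 0")
      case True
      then have "P (w - unit_vec i)"
        by (intro smaller) (auto simp: unit_vec_def)
      then show ?thesis
        using plus[of "w - unit_vec i" i] by simp
    next
      case False
      then have "P (w + unit_vec i)"
        using i by (intro smaller) (auto simp: unit_vec_def)
      then show ?thesis
        using minus[of "w + unit_vec i" i] by simp
    qed
  qed
qed

definition poly_fun :: "(int ^ 'k::finite \<Rightarrow> 'a::field) \<Rightarrow> bool" where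
  "poly_fun g \<longleftrightarrow> (\<exists>p :: ('k, 'a) mpoly. g = mpoly_eval p)"

lemma poly_fun_const: "poly_fun (\<lambda>z. c)"
  unfolding poly_fun_def
  by (rule exI[of _ "Poly_Mapping.single 0 c"]) (simp add: mpoly_eval_def fun_eq_iff)

lemma poly_fun_coordinate: "poly_fun (\<lambda>z. (of_int (z $ i) :: 'a::field))"
  unfolding poly_fun_def
  by (rule exI[of _ "Poly_Mapping.single (Poly_Mapping.single i 1) 1"]) (simp add: mpoly_eval_def fun_eq_iff)

lemma poly_fun_add:
  assumes "poly_fun g" "poly_fun h"
  shows "poly_fun (\<lambda>z. g z + h z)"
proof -
  obtain p q where "g = mpoly_eval p" "h = mpoly_eval q"
    using assms unfolding poly_fun_def by blast
  then have "(\<lambda>z. g z + h z) = mpoly_eval (p + q)"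
    by (simp add: fun_eq_iff mpoly_eval_add)
  then show ?thesis
    unfolding poly_fun_def by blast
qed

lemma poly_fun_mult:
  assumes "poly_fun g" "poly_fun h"
  shows "poly_fun (\<lambda>z. g z * h z)"
proof -
  obtain p q where "g = mpoly_eval p" "h = mpoly_eval q"
    using assms unfolding poly_fun_def by blast
  then have "(\<lambda>z. g z * h z) = mpoly_eval (p * q)"
    by (simp add: fun_eq_iff mpoly_eval_mult)
  then show ?thesis
    unfolding poly_fun_def by blast
qed

lemma poly_fun_sum: "finite A \<Longrightarrow> (\<And>x. x \<in> A \<Longrightarrow> poly_fun (g x)) \<Longrightarrow> poly_fun (\<lambda>z. \<Sum>x\<in>A. g x z)"
  by (induction A rule: finite_induct) (auto intro: poly_fun_add poly_fun_const)

lemma poly_fun_prod: "finite A \<Longrightarrow> (\<And>x. x \<in> A \<Longrightarrow> poly_fun (g x)) \<Longrightarrow> poly_fun (\<lambda>z. \<Prod>x\<in>A. g x z)"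
  by (induction A rule: finite_induct) (auto intro: poly_fun_mult poly_fun_const)

lemma poly_fun_power: "poly_fun g \<Longrightarrow> poly_fun (\<lambda>z. g z ^ n)"
  by (induction n) (auto intro: poly_fun_mult poly_fun_const)

lemma poly_fun_translate:
  assumes "poly_fun g"
  shows "poly_fun (\<lambda>z. g (z + c))"
proof -
  obtain p where "g = mpoly_eval p"
    using assms unfolding poly_fun_def by blast
  moreover have "poly_fun (\<lambda>z. \<Sum>m\<in>Poly_Mapping.keys p. Poly_Mapping.lookup p m *
      (\<Prod>i\<in>Poly_Mapping.keys m. (of_int (z $ i) + of_int (c $ i)) ^ Poly_Mapping.lookup m i))"
    by (intro poly_fun_sum poly_fun_mult poly_fun_const poly_fun_prod poly_fun_power
        poly_fun_add poly_fun_coordinate) auto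
  ultimately show ?thesis
    by (simp add: mpoly_eval_def)
qed

definition dominates :: "(int ^ 'k::finite \<Rightarrow> 'a::field) \<Rightarrow> (int ^ 'k \<Rightarrow> 'a) \<Rightarrow> bool" where
  "dominates f g \<longleftrightarrow> (\<exists>p :: ('k, 'a) mpoly. p \<noteq> 0 \<and> (\<forall>z. mpoly_eval p z * f z \<noteq> 0 \<longrightarrow> g z \<noteq> 0))"

lemma dominatesI_pointwise:
  assumes "\<And>z. f z \<noteq> 0 \<Longrightarrow> g z \<noteq> 0"
  shows "dominates f g"
  unfolding dominates_def
  by (rule exI[of _ 1]) (simp add: mpoly_eval_def assms)

lemma dominates_trans:
  fixes f g h :: "int ^ 'k::finite \<Rightarrow> 'a::field"
  assumes "dominates f g" "dominates g h"
  shows "dominates f h"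
proof -
  obtain p q :: "('k, 'a) mpoly" where
    p: "p \<noteq> 0" "\<And>z. mpoly_eval p z * f z \<noteq> 0 \<Longrightarrow> g z \<noteq> 0" and
    q: "q \<noteq> 0" "\<And>z. mpoly_eval q z * g z \<noteq> 0 \<Longrightarrow> h z \<noteq> 0"
    using assms unfolding dominates_def by blast
  have "mpoly_eval (q * p) z * f z \<noteq> 0 \<Longrightarrow> h z \<noteq> 0" for z
    using p(2)[of z] q(2)[of z] by (auto simp: mpoly_eval_mult)
  then show ?thesis
    unfolding dominates_def using mpoly_mult_nonzero[OF q(1) p(1)] by blast
qed

lemma dominates_mult:
  fixes f g h :: "int ^ 'k::finite \<Rightarrow> 'a::field"
  assumes "dominates f g" "dominates f h"
  shows "dominates f (\<lambda>z. g z * h z)"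
proof -
  obtain p q :: "('k, 'a) mpoly" where
    p: "p \<noteq> 0" "\<And>z. mpoly_eval p z * f z \<noteq> 0 \<Longrightarrow> g z \<noteq> 0" and
    q: "q \<noteq> 0" "\<And>z. mpoly_eval q z * f z \<noteq> 0 \<Longrightarrow> h z \<noteq> 0"
    using assms unfolding dominates_def by blast
  have "mpoly_eval (p * q) z * f z \<noteq> 0 \<Longrightarrow> g z * h z \<noteq> 0" for z
    using p(2)[of z] q(2)[of z] by (auto simp: mpoly_eval_mult)
  then show ?thesis
    unfolding dominates_def using mpoly_mult_nonzero[OF p(1) q(1)] by blast
qed

(* Faithfulness matters because a translate of a polynomial is only known as a function: over a
   finite field a nonzero polynomial may vanish on all of Z^k. *)
lemma dominates_translate:
  fixes g h :: "int ^ 'k::finite \<Rightarrow> 'a::field"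
  assumes faithful: "\<And>p :: ('k, 'a) mpoly. p \<noteq> 0 \<Longrightarrow> mpoly_eval p \<noteq> (\<lambda>z. 0)"
    and "dominates g h"
  shows "dominates (\<lambda>z. g (z + c)) (\<lambda>z. h (z + c))"
proof -
  obtain p :: "('k, 'a) mpoly" where
    p: "p \<noteq> 0" "\<And>z. mpoly_eval p z * g z \<noteq> 0 \<Longrightarrow> h z \<noteq> 0"
    using assms(2) unfolding dominates_def by blast
  have "poly_fun (\<lambda>z. mpoly_eval p (z + c))"
    by (rule poly_fun_translate) (auto simp: poly_fun_def)
  then obtain q :: "('k, 'a) mpoly" where q: "mpoly_eval q = (\<lambda>z. mpoly_eval p (z + c))"
    unfolding poly_fun_def by auto
  have "mpoly_eval q \<noteq> (\<lambda>z. 0)"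
  proof
    assume "mpoly_eval q = (\<lambda>z. 0)"
    then have "mpoly_eval p (z - c + c) = 0" for z
      by (metis q)
    then have "mpoly_eval p = (\<lambda>z. 0)"
      by (simp add: fun_eq_iff)
    then show False
      using faithful[OF p(1)] by simp
  qed
  then have "q \<noteq> 0"
    by (auto simp: mpoly_eval_def fun_eq_iff)
  with p(2) q show ?thesis
    unfolding dominates_def by auto
qed

lemma hypergeometric_dominates_unit_shift:
  fixes f :: "int ^ 'k::finite \<Rightarrow> 'a::field"
  assumes "hypergeometric_term f"
  shows "dominates f (\<lambda>z. f (z + unit_vec i))" "dominates (\<lambda>z. f (z + unit_vec i)) f"
proof -
  obtain A B :: "('k, 'a) mpoly" where "A \<noteq> 0" "B \<noteq> 0"
    and rec: "\<And>z. mpoly_eval A z * f z = mpoly_eval B z * f (z + unit_vec i)"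
    using assms unfolding hypergeometric_term_def by blast
  have "mpoly_eval A z * f z \<noteq> 0 \<longleftrightarrow> mpoly_eval B z * f (z + unit_vec i) \<noteq> 0" for z
    by (simp only: rec)
  then show "dominates f (\<lambda>z. f (z + unit_vec i))" "dominates (\<lambda>z. f (z + unit_vec i)) f"
    unfolding dominates_def using \<open>A \<noteq> 0\<close> \<open>B \<noteq> 0\<close> by auto
qed

lemma hypergeometric_dominates_translate:
  fixes f :: "int ^ 'k::finite \<Rightarrow> 'a::field"
  assumes faithful: "\<And>p :: ('k, 'a) mpoly. p \<noteq> 0 \<Longrightarrow> mpoly_eval p \<noteq> (\<lambda>z. 0)"
    and hyp: "hypergeometric_term f"
  shows "dominates f (\<lambda>z. f (z + w))"
proof (induction w rule: int_vec_induct)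
  case zero
  show ?case
    by (rule dominatesI_pointwise) simp
next
  case (plus w i)
  have "dominates (\<lambda>z. f (z + w)) (\<lambda>z. f (z + (w + unit_vec i)))"
    using dominates_translate[OF faithful hypergeometric_dominates_unit_shift(1)[OF hyp, of i], where c = w]
    by (simp add: add.assoc)
  with plus show ?case
    by (rule dominates_trans)
next
  case (minus w i)
  have "dominates (\<lambda>z. f (z + w)) (\<lambda>z. f (z + (w - unit_vec i)))"
    using dominates_translate[OF faithful hypergeometric_dominates_unit_shift(2)[OF hyp, of i], where c = "w - unit_vec i"]
    by (simp add: add.assoc)
  with minus show ?case
    by (rule dominates_trans)
qed

lemma not_zero_divisor_if_dominates:
  fixes f g :: "int ^ 'k::finite \<Rightarrow> 'a::field"
  assumes "\<not> zero_divisor f" "dominates f g"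
  shows "\<not> zero_divisor g"
proof
  assume "zero_divisor g"
  then obtain q where q: "q \<noteq> 0" "\<And>z. mpoly_eval q z * g z = 0"
    unfolding zero_divisor_def by blast
  obtain p where p: "p \<noteq> 0" "\<And>z. mpoly_eval p z * f z \<noteq> 0 \<Longrightarrow> g z \<noteq> 0"
    using assms(2) unfolding dominates_def by blast
  obtain z where "mpoly_eval (q * p) z * f z \<noteq> 0"
    using assms(1) mpoly_mult_nonzero[OF q(1) p(1)] unfolding zero_divisor_def by blast
  with p(2)[of z] q(2)[of z] show False
    by (simp add: mpoly_eval_mult)
qed

theorem lemmaB16:
  fixes f :: "int ^ 'k::finite \<Rightarrow> 'a::field"
    and ws :: "(int ^ 'k) list"
  assumes "hypergeometric_term f"
    and "\<not> zero_divisor f"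
  shows "\<not> zero_divisor (\<lambda>z. \<Prod>w\<leftarrow>ws. f (z + w))"
proof -
  have faithful: "mpoly_eval p \<noteq> (\<lambda>z. 0)" if "p \<noteq> 0" for p :: "('k, 'a) mpoly"
    using assms(2) that unfolding zero_divisor_def by auto
  have "dominates f (\<lambda>z. \<Prod>w\<leftarrow>ws. f (z + w))"
  proof (induction ws)
    case Nil
    show ?case
      by (rule dominatesI_pointwise) simp
  next
    case (Cons w ws)
    have "dominates f (\<lambda>z. f (z + w) * (\<Prod>v\<leftarrow>ws. f (z + v)))"
      by (rule dominates_mult[OF hypergeometric_dominates_translate[OF faithful assms(1)] Cons.IH])
    then show ?case
      by simp
  qed
  then show ?thesis
    using not_zero_divisor_if_dominates[OF assms(2)] by blast
qed

end
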